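(* Let $p(L,M,D;\mu)$ be a generative reasoning model. For every finite $\Delta\subseteq L$, $[\![\Delta]\!]_p^{\max}\neq\emptyset$.
   Context: A generative reasoning model is given by the following data: - a multiset of data $\{d_1,\dots,d_K\}$ with $K\ge1$; - a propositional language $L$ over finitely many atoms, with set of models (truth assignments) $\mathcal M$; - a function $m:\{d_1,\dots,d_K\}\to\mathcal M$ assigning to each datum the model it supports. The induced probability of a model $n$ is $p(n)=|\{k:m(d_k)=n\}|/K$. Notation and definitions: - For $S\subseteq L$, $[\![S]\!]$ is the set of models satisfying every formula of $S$, and $[\![S]\!]_p=\{m\in[\![S]\!]:p(m)\neq0\}$. - A subset $S\subseteq\Delta$ is a maximal possible subset of $\Delta$ if $[\![S]\!]_p\neq\emptyset$ and $[\![S\cup\{\alpha\}]\!]_p=\emptyset$ for all $\alpha\in\Delta\setminus S$. - A cardinality-maximal possible subset is a maximal possible subset of maximum cardinality. - $MPS(\Delta)$ is the set of cardinality-maximal possible subsets of $\Delta$, and $[\![\Delta]\!]_p^{\max}=\bigcup_{S\in MPS(\Delta)}[\![S]\!]_p$. *)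

theory Defs
  imports Complex_Main "HOL-Library.Multiset"
begin

text \<open>Propositional formulas over atoms of type 'a; the language L is the set of all such formulas.\<close>
datatype 'a form =
    Atom 'a
  | Top
  | Bot
  | Neg "'a form"
  | Conj "'a form" "'a form"
  | Disj "'a form" "'a form"
  | Imp "'a form" "'a form"

type_synonym 'a model = "'a \<Rightarrow> bool"

fun sat :: "'a model \<Rightarrow> 'a form \<Rightarrow> bool" where
  "sat v (Atom x) = v x"
| "sat v Top = True"
| "sat v Bot = False"
| "sat v (Neg f) = (\<not> sat v f)"
| "sat v (Conj f g) = (sat v f \<and> sat v g)"
| "sat v (Disj f g) = (sat v f \<or> sat v g)"
| "sat v (Imp f g) = (sat v f \<longrightarrow> sat v g)"

text \<open>Generative reasoning model: a multiset of data D (K = size D) and a map m from data to models.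
  Induced probability p(n) = |{k. m(d_k) = n}| / K.\<close>
definition prob :: "'d multiset \<Rightarrow> ('d \<Rightarrow> 'a model) \<Rightarrow> 'a model \<Rightarrow> real" where
  "prob D m n = real (size (filter_mset (\<lambda>d. m d = n) D)) / real (size D)"

definition models :: "'a form set \<Rightarrow> 'a model set" where
  "models S = {v. \<forall>f\<in>S. sat v f}"

definition models_p :: "'d multiset \<Rightarrow> ('d \<Rightarrow> 'a model) \<Rightarrow> 'a form set \<Rightarrow> 'a model set" where
  "models_p D m S = {v \<in> models S. prob D m v \<noteq> 0}"

definition max_possible_subset ::
  "'d multiset \<Rightarrow> ('d \<Rightarrow> 'a model) \<Rightarrow> 'a form set \<Rightarrow> 'a form set \<Rightarrow> bool" where
  "max_possible_subset D m \<Delta> S \<longleftrightarrow>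
     S \<subseteq> \<Delta> \<and> models_p D m S \<noteq> {} \<and>
     (\<forall>\<alpha>\<in>\<Delta> - S. models_p D m (S \<union> {\<alpha>}) = {})"

definition MPS :: "'d multiset \<Rightarrow> ('d \<Rightarrow> 'a model) \<Rightarrow> 'a form set \<Rightarrow> 'a form set set" where
  "MPS D m \<Delta> = {S. max_possible_subset D m \<Delta> S \<and>
     (\<forall>S'. max_possible_subset D m \<Delta> S' \<longrightarrow> card S' \<le> card S)}"

definition models_p_max :: "'d multiset \<Rightarrow> ('d \<Rightarrow> 'a model) \<Rightarrow> 'a form set \<Rightarrow> 'a model set" where
  "models_p_max D m \<Delta> = (\<Union>S\<in>MPS D m \<Delta>. models_p D m S)"

end

theory Submission
  imports Defs
begin

text \<open>A model has nonzero probability exactly when it is supported by some datum, so the empty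
  set of formulas is possible as soon as there is a datum. Among the finitely many possible
  subsets of \<open>\<Delta>\<close> one of maximum cardinality is then automatically maximal under inclusion,
  hence cardinality-maximal, and its nonempty set of possible models lies in the union.\<close>

lemma prob_nonzero_iff: "prob D m n \<noteq> 0 \<longleftrightarrow> n \<in> m ` set_mset D"
  by (auto simp: prob_def filter_mset_eq_conv)

lemma models_p_eq: "models_p D m S = {v \<in> m ` set_mset D. \<forall>f\<in>S. sat v f}"
  by (auto simp: models_p_def models_def prob_nonzero_iff)

lemma models_p_empty: "models_p D m {} = m ` set_mset D"
  by (simp add: models_p_eq)

lemma cardinality_maximal_in_MPS:
  assumes "finite \<Delta>" and "S \<subseteq> \<Delta>" and "models_p D m S \<noteq> {}"
    and greatest: "\<And>S'. S' \<subseteq> \<Delta> \<Longrightarrow> models_p D m S' \<noteq> {} \<Longrightarrow> card S' \<le> card S"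
  shows "S \<in> MPS D m \<Delta>"
proof -
  have "models_p D m (S \<union> {\<alpha>}) = {}" if "\<alpha> \<in> \<Delta> - S" for \<alpha>
  proof (rule ccontr)
    assume "models_p D m (S \<union> {\<alpha>}) \<noteq> {}"
    with that assms(2) have "card (insert \<alpha> S) \<le> card S"
      using greatest[of "S \<union> {\<alpha>}"] by auto
    moreover have "finite S" using assms(1,2) by (rule finite_subset[rotated])
    ultimately show False using that by simp
  qed
  with assms(2,3) have "max_possible_subset D m \<Delta> S"
    by (simp add: max_possible_subset_def)
  with greatest show ?thesis
    by (simp add: MPS_def max_possible_subset_def)
qed

lemma MPS_nonempty:
  assumes "finite \<Delta>" and "models_p D m {} \<noteq> {}"
  shows "MPS D m \<Delta> \<noteq> {}"
proof -
  define possible where "possible S \<longleftrightarrow> S \<subseteq> \<Delta> \<and> models_p D m S \<noteq> {}" for S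
  have "possible {}" using assms(2) by (simp add: possible_def)
  moreover have "\<forall>S. possible S \<longrightarrow> card S < Suc (card \<Delta>)"
    using assms(1) by (auto simp: possible_def less_Suc_eq_le intro: card_mono)
  ultimately obtain S where "possible S" and "\<forall>S'. possible S' \<longrightarrow> card S' \<le> card S"
    using ex_has_greatest_nat by metis
  then have "S \<in> MPS D m \<Delta>"
    using assms(1) by (intro cardinality_maximal_in_MPS) (auto simp: possible_def)
  then show ?thesis by blast
qed

theorem lemma2:
  fixes D :: "'d multiset" and m :: "'d \<Rightarrow> ('a::finite) model" and \<Delta> :: "'a form set"
  assumes "size D \<ge> 1"
    and "finite \<Delta>"
  shows "models_p_max D m \<Delta> \<noteq> {}"
proof -
  have "D \<noteq> {#}" using assms(1) by auto
  then have "models_p D m {} \<noteq> {}" by (simp add: models_p_empty)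
  then obtain S where "S \<in> MPS D m \<Delta>" using MPS_nonempty[OF assms(2)] by blast
  moreover have "models_p D m S \<noteq> {}"
    using \<open>S \<in> MPS D m \<Delta>\<close> by (simp add: MPS_def max_possible_subset_def)
  ultimately show ?thesis by (auto simp: models_p_max_def)
qed

end
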